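(* Let $A\in GL_n(\mathbb{C})$ with $M_1(A)\in(\frac12,1)$ and let $c\in(M_1(A),1)$. Then $M_1(A_m)<f^{m-1}(c)$ for every $m\geqslant1$.
   Context: For $B\in GL_N(\mathbb{C})$, $M_1(B)$ denotes $\frac1N$ times the algebraic multiplicity of $1$ as an eigenvalue of $B$. Define $A_1=A$ and $A_{m+1}=A_m\otimes A_m$ (Kronecker product), so $A_m\in GL_{n^{2^{m-1}}}(\mathbb{C})$. Let $f:[\frac12,1]\to[\frac12,1]$, $f(x)=x^2+(1-x)^2$, and $f^{m}$ its $m$-fold iterate ($f^0=\mathrm{id}$). *)

theory Defs
  imports "Jordan_Normal_Form.Jordan_Normal_Form"
begin

definition kron_mat :: "'a :: times mat \<Rightarrow> 'a mat \<Rightarrow> 'a mat" where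
  "kron_mat A B = mat (dim_row A * dim_row B) (dim_col A * dim_col B)
     (\<lambda>(i, j). A $$ (i div dim_row B, j div dim_col B) * B $$ (i mod dim_row B, j mod dim_col B))"

text \<open>kron_iter A k is A_(k+1): kron_iter A 0 = A_1 = A, A_(m+1) = A_m (x) A_m.\<close>
primrec kron_iter :: "'a :: times mat \<Rightarrow> nat \<Rightarrow> 'a mat" where
  "kron_iter A 0 = A"
| "kron_iter A (Suc k) = kron_mat (kron_iter A k) (kron_iter A k)"

definition M1 :: "complex mat \<Rightarrow> real" where
  "M1 B = real (order 1 (char_poly B)) / real (dim_row B)"

definition fmap :: "real \<Rightarrow> real" where
  "fmap x = x^2 + (1 - x)^2"

end

theory Submission
  imports Defs "Jordan_Normal_Form.Schur_Decomposition"
begin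

text \<open>Triangularise \<open>A\<close> by Schur's theorem. Then \<open>A\<^sub>m\<close> is similar to a triangular
  matrix whose diagonal is the \<open>2\<^sup>m\<^sup>-\<^sup>1\<close>-fold Kronecker power of the eigenvalue list, and
  \<open>M\<^sub>1(A\<^sub>m)\<close> is the proportion of ones on it. Let \<open>s\<^sub>k\<close> be the proportion of pairs of
  equal diagonal entries of \<open>A\<^sub>k\<^sub>+\<^sub>1\<close>. A product \<open>\<lambda>\<^sub>i \<lambda>\<^sub>j\<close> equals \<open>1\<close> iff
  \<open>\<lambda>\<^sub>i = \<lambda>\<^sub>j\<^sup>-\<^sup>1\<close>, and by AM-GM on fibre sizes such twisted coincidences are no more
  frequent than coincidences, so \<open>M\<^sub>1(A\<^sub>k\<^sub>+\<^sub>2) \<le> s\<^sub>k\<close>. Rewriting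
  \<open>\<lambda>\<^sub>i \<lambda>\<^sub>j = \<lambda>\<^sub>p \<lambda>\<^sub>q\<close> as \<open>\<lambda>\<^sub>i / \<lambda>\<^sub>p = \<lambda>\<^sub>q / \<lambda>\<^sub>j\<close>, the same argument gives
  \<open>s\<^sub>k\<^sub>+\<^sub>1 \<le> s\<^sub>k\<^sup>2 + (1 - s\<^sub>k) min s\<^sub>k (1 - s\<^sub>k)\<close>, while \<open>s\<^sub>0 \<le> f(M\<^sub>1(A))\<close>.
  As \<open>f \<ge> 1/2\<close> and \<open>f\<close> increases on \<open>[1/2, \<infinity>)\<close>, induction yields
  \<open>s\<^sub>k \<le> f\<^sup>k\<^sup>+\<^sup>1(M\<^sub>1(A))\<close>, and strict monotonicity of \<open>f\<^sup>k\<close> replaces \<open>M\<^sub>1(A)\<close> by \<open>c\<close>.\<close>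

section \<open>Kronecker squares of matrices\<close>

lemma kron_mat_carrier: "kron_mat A B \<in> carrier_mat (dim_row A * dim_row B) (dim_col A * dim_col B)"
  unfolding kron_mat_def by auto

lemma dim_kron_mat [simp]:
  "dim_row (kron_mat A B) = dim_row A * dim_row B"
  "dim_col (kron_mat A B) = dim_col A * dim_col B"
  unfolding kron_mat_def by auto

lemma index_kron_mat [simp]:
  "i < dim_row A * dim_row B \<Longrightarrow> j < dim_col A * dim_col B \<Longrightarrow>
   kron_mat A B $$ (i, j) = A $$ (i div dim_row B, j div dim_col B) * B $$ (i mod dim_row B, j mod dim_col B)"
  unfolding kron_mat_def by auto

lemma div_mod_less_mult:
  assumes "t < a * (b :: nat)" shows "t div b < a" "t mod b < b"
  using assms by (auto simp: less_mult_imp_div_less) (cases "b = 0"; simp)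

lemma mult_add_less_mult:
  assumes "x < a" "y < (b :: nat)" shows "x * b + y < a * b"
proof -
  have "x * b + y < (x + 1) * b" using assms by simp
  also have "\<dots> \<le> a * b" using assms by (intro mult_le_mono1) simp
  finally show ?thesis .
qed

lemma bij_betw_div_mod: "bij_betw (\<lambda>t. (t div b, t mod b)) {..<a * b} ({..<a} \<times> {..<(b :: nat)})"
  by (rule bij_betw_byWitness[where f' = "\<lambda>(x, y). x * b + y"])
    (auto simp: div_mod_less_mult mult_add_less_mult)

lemma sum_lessThan_mult: "(\<Sum>t < a * b. f t) = (\<Sum>x < a. \<Sum>y < (b :: nat). f (x * b + y))"
proof -
  have "(\<Sum>t < a * b. f t) = (\<Sum>t < a * b. (\<lambda>(x, y). f (x * b + y)) (t div b, t mod b))"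
    by simp
  also have "\<dots> = (\<Sum>(x, y) \<in> {..<a} \<times> {..<b}. f (x * b + y))"
    by (rule sum.reindex_bij_betw[OF bij_betw_div_mod])
  finally show ?thesis by (simp add: sum.cartesian_product)
qed

lemma kron_mat_mult:
  fixes A :: "'a :: comm_semiring_0 mat"
  assumes A: "A \<in> carrier_mat n1 k1" and B: "B \<in> carrier_mat n2 k2"
    and C: "C \<in> carrier_mat k1 m1" and D: "D \<in> carrier_mat k2 m2"
  shows "kron_mat A B * kron_mat C D = kron_mat (A * C) (B * D)"
proof (rule eq_matI)
  fix i j assume "i < dim_row (kron_mat (A * C) (B * D))" "j < dim_col (kron_mat (A * C) (B * D))"
  then have i: "i < n1 * n2" and j: "j < m1 * m2" using A B C D by auto
  have "(kron_mat A B * kron_mat C D) $$ (i, j)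
      = (\<Sum>t < k1 * k2. kron_mat A B $$ (i, t) * kron_mat C D $$ (t, j))"
    using A B C D i j by (simp add: scalar_prod_def lessThan_atLeast0)
  also have "\<dots> = (\<Sum>x < k1. \<Sum>y < k2. (A $$ (i div n2, x) * C $$ (x, j div m2)) *
                                       (B $$ (i mod n2, y) * D $$ (y, j mod m2)))"
    unfolding sum_lessThan_mult using A B C D i j
    by (intro sum.cong refl) (simp add: mult_add_less_mult mult_ac)
  also have "\<dots> = (A * C) $$ (i div n2, j div m2) * (B * D) $$ (i mod n2, j mod m2)"
    using A B C D i j by (simp add: div_mod_less_mult scalar_prod_def lessThan_atLeast0 sum_product)
  also have "\<dots> = kron_mat (A * C) (B * D) $$ (i, j)"
    using A B C D i j by simp
  finally show "(kron_mat A B * kron_mat C D) $$ (i, j) = kron_mat (A * C) (B * D) $$ (i, j)" .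
qed (use A B C D in auto)

lemma kron_mat_one: "kron_mat (1\<^sub>m a) (1\<^sub>m b) = (1\<^sub>m (a * b) :: 'a :: semiring_1 mat)"
proof (rule eq_matI)
  fix i j assume "i < dim_row (1\<^sub>m (a * b))" "j < dim_col (1\<^sub>m (a * b))"
  then have i: "i < a * b" and j: "j < a * b" by auto
  have "(i div b = j div b \<and> i mod b = j mod b) \<longleftrightarrow> i = j"
    by (metis div_mult_mod_eq)
  then show "kron_mat (1\<^sub>m a) (1\<^sub>m b) $$ (i, j) = (1\<^sub>m (a * b) $$ (i, j) :: 'a)"
    using i j by (auto simp: div_mod_less_mult)
qed auto

lemma similar_mat_kron_mat:
  fixes A :: "'a :: comm_ring_1 mat"
  assumes "similar_mat A T"
  shows "similar_mat (kron_mat A A) (kron_mat T T)"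
proof -
  obtain m P Q where carrier: "{A, T, P, Q} \<subseteq> carrier_mat m m"
    and PQ: "P * Q = 1\<^sub>m m" and QP: "Q * P = 1\<^sub>m m" and A: "A = P * T * Q"
    using similar_matD[OF assms] by blast
  then have P: "P \<in> carrier_mat m m" and Q: "Q \<in> carrier_mat m m" and T: "T \<in> carrier_mat m m"
    by auto
  have PT: "P * T \<in> carrier_mat m m" using P T by auto
  show ?thesis
  proof (rule similar_matI)
    show "{kron_mat A A, kron_mat T T, kron_mat P P, kron_mat Q Q} \<subseteq> carrier_mat (m * m) (m * m)"
      using carrier by auto
    show "kron_mat P P * kron_mat Q Q = 1\<^sub>m (m * m)"
      by (simp add: kron_mat_mult[OF P P Q Q] PQ kron_mat_one)
    show "kron_mat Q Q * kron_mat P P = 1\<^sub>m (m * m)"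
      by (simp add: kron_mat_mult[OF Q Q P P] QP kron_mat_one)
    show "kron_mat A A = kron_mat P P * kron_mat T T * kron_mat Q Q"
      by (simp add: kron_mat_mult[OF P P T T] kron_mat_mult[OF PT PT Q Q] A)
  qed
qed

lemma upper_triangular_kron_mat:
  fixes T :: "'a :: semiring_0 mat"
  assumes T: "upper_triangular T" "T \<in> carrier_mat n n"
  shows "upper_triangular (kron_mat T T)"
  unfolding upper_triangular_def
proof (intro allI impI)
  fix i j assume "i < dim_row (kron_mat T T)" and ji: "j < i"
  then have i: "i < n * n" and j: "j < n * n" using T by auto
  have "j div n \<le> i div n" using ji by (simp add: div_le_mono)
  moreover have "j mod n < i mod n" if "j div n = i div n"
    using ji that by (metis add_less_cancel_left div_mult_mod_eq linorder_neqE_nat less_asym)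
  ultimately have "j div n < i div n \<or> j mod n < i mod n"
    by linarith
  then show "kron_mat T T $$ (i, j) = 0"
    using T i j unfolding upper_triangular_def by (auto simp: div_mod_less_mult)
qed

lemma power_two_power_Suc: "x ^ 2 ^ Suc k = x ^ 2 ^ k * (x ^ 2 ^ k :: 'a :: monoid_mult)"
  by (simp add: power_mult[symmetric] power2_eq_square[symmetric] power_even_eq)

lemma kron_iter_carrier: "A \<in> carrier_mat n n \<Longrightarrow> kron_iter A k \<in> carrier_mat (n ^ 2 ^ k) (n ^ 2 ^ k)"
proof (induction k)
  case (Suc k)
  then show ?case
    using kron_mat_carrier[of "kron_iter A k" "kron_iter A k"] unfolding power_two_power_Suc by auto
qed simp

lemma similar_mat_kron_iter:
  fixes A :: "'a :: comm_ring_1 mat"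
  shows "similar_mat A T \<Longrightarrow> similar_mat (kron_iter A k) (kron_iter T k)"
  by (induction k) (simp_all add: similar_mat_kron_mat)

lemma upper_triangular_kron_iter:
  fixes T :: "'a :: semiring_0 mat"
  shows "upper_triangular T \<Longrightarrow> T \<in> carrier_mat n n \<Longrightarrow> upper_triangular (kron_iter T k)"
  by (induction k) (auto intro: upper_triangular_kron_mat kron_iter_carrier)

section \<open>Counting pairs\<close>

lemma card_filter_bij_betw:
  assumes "bij_betw f A B"
  shows "card {x \<in> A. P (f x)} = card {y \<in> B. P y}"
proof -
  have "bij_betw f {x \<in> A. P (f x)} {y \<in> B. P y}"
    using assms unfolding bij_betw_def by (auto intro: inj_on_subset)
  then show ?thesis by (rule bij_betw_same_card)
qed

lemma card_pairs_eq_sum_card_fibres: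
  assumes "finite I"
  shows "card {p \<in> I \<times> I. d (fst p) = F (snd p)} = (\<Sum>k \<in> I. card {i \<in> I. d i = F k})"
proof -
  have "card {p \<in> I \<times> I. d (fst p) = F (snd p)} = (\<Sum>p \<in> I \<times> I. if d (fst p) = F (snd p) then 1 else 0)"
    using assms by (simp add: sum.inter_filter[symmetric])
  also have "\<dots> = (\<Sum>i \<in> I. \<Sum>k \<in> I. if d i = F k then 1 else 0)"
    by (simp add: sum.cartesian_product case_prod_beta)
  also have "\<dots> = (\<Sum>k \<in> I. \<Sum>i \<in> I. if d i = F k then 1 else 0)"
    by (rule sum.swap)
  also have "\<dots> = (\<Sum>k \<in> I. card {i \<in> I. d i = F k})"
    using assms by (simp add: sum.inter_filter[symmetric])
  finally show ?thesis .
qed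

lemma sum_comp_eq_sum_card_fibres:
  assumes "finite I"
  shows "(\<Sum>k \<in> I. g (d k) :: real) = (\<Sum>w \<in> d ` I. real (card {i \<in> I. d i = w}) * g w)"
proof -
  have "(\<Sum>k \<in> I. g (d k)) = (\<Sum>w \<in> d ` I. \<Sum>k \<in> {k \<in> I. d k = w}. g (d k))"
    using assms by (rule sum.image_gen)
  also have "\<dots> = (\<Sum>w \<in> d ` I. real (card {i \<in> I. d i = w}) * g w)"
    by (intro sum.cong refl) simp
  finally show ?thesis .
qed

text \<open>With \<open>c w\<close> the size of the fibre of \<open>d\<close> over \<open>w\<close>, the left-hand side is
  \<open>\<Sum>w. c w * c (h w)\<close> and the right-hand side is \<open>\<Sum>w. c w\<^sup>2\<close>; compare them by
  \<open>2ab \<le> a\<^sup>2 + b\<^sup>2\<close> and injectivity of \<open>h\<close>.\<close>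
lemma card_twisted_pairs_le:
  assumes I: "finite I" and h: "inj h"
  shows "card {p \<in> I \<times> I. d (fst p) = h (d (snd p))} \<le> card {p \<in> I \<times> I. d (fst p) = d (snd p)}"
proof -
  define c where "c w = real (card {i \<in> I. d i = w})" for w
  define V where "V = d ` I"
  have V: "finite V" using I by (simp add: V_def)
  have c_outside: "c w = 0" if "w \<notin> V" for w
    using that unfolding c_def V_def by (auto simp: card_eq_0_iff)
  have "(\<Sum>w \<in> V. c (h w) ^ 2) = (\<Sum>w \<in> h ` V. c w ^ 2)"
    using h by (simp add: sum.reindex inj_on_subset)
  also have "\<dots> \<le> (\<Sum>w \<in> V \<union> h ` V. c w ^ 2)"
    using V by (intro sum_mono2) auto
  also have "\<dots> = (\<Sum>w \<in> V. c w ^ 2)"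
    using V c_outside by (intro sum.mono_neutral_right) auto
  finally have twisted_squares: "(\<Sum>w \<in> V. c (h w) ^ 2) \<le> (\<Sum>w \<in> V. c w ^ 2)" .
  have "real (card {p \<in> I \<times> I. d (fst p) = h (d (snd p))}) = (\<Sum>w \<in> V. c w * c (h w))"
    using card_pairs_eq_sum_card_fibres[OF I, of d "\<lambda>k. h (d k)"]
      sum_comp_eq_sum_card_fibres[OF I, of "\<lambda>w. c (h w)" d]
    by (simp add: c_def V_def)
  also have "\<dots> \<le> (\<Sum>w \<in> V. (c w ^ 2 + c (h w) ^ 2) / 2)"
  proof (intro sum_mono)
    fix w
    show "c w * c (h w) \<le> (c w ^ 2 + c (h w) ^ 2) / 2"
      using sum_squares_bound[of "c w" "c (h w)"] by simp
  qed
  also have "\<dots> \<le> (\<Sum>w \<in> V. c w * c w)"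
    using twisted_squares by (simp add: sum.distrib sum_divide_distrib[symmetric] power2_eq_square)
  also have "\<dots> = real (card {p \<in> I \<times> I. d (fst p) = d (snd p)})"
    using card_pairs_eq_sum_card_fibres[OF I, of d d] sum_comp_eq_sum_card_fibres[OF I, of c d]
    by (simp add: c_def V_def)
  finally show ?thesis by linarith
qed

lemma card_equal_pairs_le:
  assumes X: "finite X"
    and fibres: "\<And>v. v \<noteq> 1 \<Longrightarrow> card {x \<in> X. r x = v} \<le> B"
  defines "u \<equiv> real (card {x \<in> X. r x = 1})"
  shows "real (card {p \<in> X \<times> X. r (fst p) = r (snd p)}) \<le>
    u ^ 2 + (real (card X) - u) * min (real B) (real (card X) - u)"
proof -
  define c where "c x = card {y \<in> X. r y = r x}" for x
  let ?X1 = "{x \<in> X. r x = 1}" and ?Y = "{x \<in> X. r x \<noteq> 1}"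
  have partition: "X = ?X1 \<union> ?Y" "?X1 \<inter> ?Y = {}" by auto
  then have card_Y: "real (card ?Y) = real (card X) - u"
    using X card_Un_disjoint[of ?X1 ?Y] unfolding u_def by simp
  have "real (card {p \<in> X \<times> X. r (fst p) = r (snd p)}) = (\<Sum>x \<in> X. real (c x))"
    using X by (simp add: card_pairs_eq_sum_card_fibres c_def)
  also have "\<dots> = (\<Sum>x \<in> ?X1. real (c x)) + (\<Sum>x \<in> ?Y. real (c x))"
    using X partition sum.union_disjoint[of ?X1 ?Y] by simp
  also have "(\<Sum>x \<in> ?X1. real (c x)) = u ^ 2"
    by (simp add: c_def u_def power2_eq_square)
  also have "(\<Sum>x \<in> ?Y. real (c x)) \<le> (\<Sum>x \<in> ?Y. min (real B) (real (card X) - u))"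
  proof (intro sum_mono)
    fix x assume x: "x \<in> ?Y"
    have "c x \<le> B" unfolding c_def using fibres x by auto
    moreover have "c x \<le> card ?Y"
      unfolding c_def using X x by (intro card_mono) auto
    ultimately show "real (c x) \<le> min (real B) (real (card X) - u)"
      using card_Y by simp
  qed
  also have "\<dots> = (real (card X) - u) * min (real B) (real (card X) - u)"
    using card_Y by simp
  finally show ?thesis by simp
qed

definition ones_count :: "nat \<Rightarrow> (nat \<Rightarrow> 'a :: one) \<Rightarrow> nat" where
  "ones_count N d = card {i \<in> {..<N}. d i = 1}"

definition coincidences :: "nat \<Rightarrow> (nat \<Rightarrow> 'a) \<Rightarrow> nat" where
  "coincidences N d = card {p \<in> {..<N} \<times> {..<N}. d (fst p) = d (snd p)}"

text \<open>If \<open>d\<close> lists the diagonal of an \<open>N \<times> N\<close> matrix, \<open>kron_square N d\<close> lists the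
  diagonal of its Kronecker square.\<close>
definition kron_square :: "nat \<Rightarrow> (nat \<Rightarrow> 'a :: times) \<Rightarrow> nat \<Rightarrow> 'a" where
  "kron_square N d i = d (i div N) * d (i mod N)"

lemma card_filter_lessThan_le: "card {i \<in> {..<N}. P i} \<le> N"
  using card_mono[of "{..<N}" "{i \<in> {..<N}. P i}"] by auto

lemma ones_count_le: "ones_count N d \<le> N"
  unfolding ones_count_def by (rule card_filter_lessThan_le)

lemma coincidences_le_ones_count:
  "real (coincidences N d) \<le> real (ones_count N d) ^ 2 + (real N - real (ones_count N d)) ^ 2"
proof -
  have "real (coincidences N d) \<le> real (ones_count N d) ^ 2 +
      (real N - real (ones_count N d)) * min (real N) (real N - real (ones_count N d))"
    unfolding coincidences_def ones_count_def
    using card_equal_pairs_le[of "{..<N}" d N] card_filter_lessThan_le by simp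
  then show ?thesis
    using ones_count_le[of N d] by (simp add: min_def power2_eq_square split: if_splits)
qed

lemma card_kron_square_filter:
  "card {i \<in> {..<N * N}. P (kron_square N d i)} = card {p \<in> {..<N} \<times> {..<N}. P (d (fst p) * d (snd p))}"
  unfolding kron_square_def
  using card_filter_bij_betw[OF bij_betw_div_mod[of N N], where P = "\<lambda>p. P (d (fst p) * d (snd p))"]
  by simp

lemma ones_count_kron_square_le:
  fixes d :: "nat \<Rightarrow> 'a :: field"
  assumes nonzero: "\<And>i. i < N \<Longrightarrow> d i \<noteq> 0"
  shows "ones_count (N * N) (kron_square N d) \<le> coincidences N d"
proof -
  have "ones_count (N * N) (kron_square N d) = card {p \<in> {..<N} \<times> {..<N}. d (fst p) * d (snd p) = 1}"
    unfolding ones_count_def by (rule card_kron_square_filter)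
  also have "{p \<in> {..<N} \<times> {..<N}. d (fst p) * d (snd p) = 1} =
      {p \<in> {..<N} \<times> {..<N}. d (fst p) = inverse (d (snd p))}"
    using nonzero by (auto simp: field_simps)
  also have "card \<dots> \<le> coincidences N d"
    unfolding coincidences_def by (rule card_twisted_pairs_le) (auto intro: inj_on_inverseI[where g = inverse])
  finally show ?thesis .
qed

text \<open>Reorder \<open>d i * d j = d k * d l\<close> as \<open>d i / d k = d l / d j\<close>: coincidences of
  the Kronecker square are coincidences of the ratio function on pairs. Its value \<open>1\<close> is
  taken exactly on the coincidences of \<open>d\<close>, any other value at most as often.\<close>
lemma coincidences_kron_square_le:
  fixes d :: "nat \<Rightarrow> 'a :: field"
  assumes nonzero: "\<And>i. i < N \<Longrightarrow> d i \<noteq> 0"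
  defines "u \<equiv> real (coincidences N d)"
  shows "real (coincidences (N * N) (kron_square N d)) \<le> u ^ 2 + (real (N * N) - u) * min u (real (N * N) - u)"
proof -
  let ?J = "{..<N} \<times> {..<N}"
  define r where "r p = d (fst p) / d (snd p)" for p
  define \<sigma> where "\<sigma> q = ((fst (fst q), fst (snd q)), (snd (snd q), snd (fst q)))"
    for q :: "(nat \<times> nat) \<times> (nat \<times> nat)"
  have \<sigma>: "bij_betw \<sigma> (?J \<times> ?J) (?J \<times> ?J)"
    by (rule bij_betw_byWitness[where f' = "\<lambda>q. ((fst (fst q), snd (snd q)), (snd (fst q), fst (snd q)))"])
      (auto simp: \<sigma>_def)
  have "coincidences (N * N) (kron_square N d) =
      card {q \<in> ?J \<times> ?J. d (fst (fst q)) * d (snd (fst q)) = d (fst (snd q)) * d (snd (snd q))}"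
    unfolding coincidences_def kron_square_def
    using card_filter_bij_betw[OF bij_betw_map_prod[OF bij_betw_div_mod[of N N] bij_betw_div_mod[of N N]],
      of "\<lambda>q. d (fst (fst q)) * d (snd (fst q)) = d (fst (snd q)) * d (snd (snd q))"]
    by simp
  also have "\<dots> = card {q \<in> ?J \<times> ?J. r (fst (\<sigma> q)) = r (snd (\<sigma> q))}"
    using nonzero by (intro arg_cong[where f = card]) (auto simp: r_def \<sigma>_def field_simps)
  also have "\<dots> = card {q \<in> ?J \<times> ?J. r (fst q) = r (snd q)}"
    by (rule card_filter_bij_betw[OF \<sigma>])
  also have "real \<dots> \<le> real (card {p \<in> ?J. r p = 1}) ^ 2 + (real (card ?J) - real (card {p \<in> ?J. r p = 1})) *
      min u (real (card ?J) - real (card {p \<in> ?J. r p = 1}))"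
    unfolding u_def
  proof (rule card_equal_pairs_le)
    fix v :: 'a assume "v \<noteq> 1"
    show "card {p \<in> ?J. r p = v} \<le> coincidences N d"
    proof (cases "v = 0")
      case True
      then have "{p \<in> ?J. r p = v} = {}" using nonzero by (auto simp: r_def)
      then show ?thesis by (simp only: card.empty le0)
    next
      case False
      have "{p \<in> ?J. r p = v} = {p \<in> ?J. d (fst p) = v * d (snd p)}"
        using nonzero by (auto simp: r_def field_simps)
      also have "card \<dots> \<le> coincidences N d"
        unfolding coincidences_def by (rule card_twisted_pairs_le) (use False in \<open>auto intro: injI\<close>)
      finally show ?thesis .
    qed
  qed simp
  also have "card {p \<in> ?J. r p = 1} = coincidences N d"
    unfolding coincidences_def using nonzero by (intro arg_cong[where f = card]) (auto simp: r_def)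
  finally show ?thesis by (simp add: u_def)
qed

section \<open>The map \<open>f\<close>\<close>

lemma fmap_eq: "fmap x = 1/2 + 2 * (x - 1/2) ^ 2"
  by (simp add: fmap_def power2_eq_square algebra_simps)

lemma fmap_ge_half: "1/2 \<le> fmap x"
  by (simp add: fmap_eq)

lemma fmap_strict_mono:
  assumes "1/2 \<le> x" "x < y" shows "fmap x < fmap y"
proof -
  have "(x - 1/2) ^ 2 < (y - 1/2) ^ 2"
    using assms by (intro power_strict_mono) auto
  then show ?thesis by (simp add: fmap_eq)
qed

lemma funpow_fmap_strict_mono:
  assumes "1/2 \<le> x" "x < y" shows "(fmap ^^ k) x < (fmap ^^ k) y"
proof (induction k)
  case (Suc k)
  have "1/2 \<le> (fmap ^^ k) x"
    using assms fmap_ge_half by (cases k) auto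
  with Suc show ?case by (simp add: fmap_strict_mono)
qed (use assms in simp)

text \<open>The recursion obeyed by the coincidence densities. Below \<open>1/2\<close> its right-hand
  side is just \<open>s\<close>, which is still below every value of \<open>fmap\<close>.\<close>
lemma le_fmap_if_le_recursion:
  assumes "s \<le> t" and "s' \<le> s ^ 2 + (1 - s) * min s (1 - s)"
  shows "s' \<le> fmap t"
proof (cases "s \<le> 1/2")
  case True
  then have "s' \<le> s"
    using assms(2) by (simp add: min_def power2_eq_square algebra_simps)
  then show ?thesis using True fmap_ge_half[of t] by linarith
next
  case False
  then have "s' \<le> fmap s"
    using assms(2) by (simp add: min_def fmap_def power2_eq_square)
  also have "\<dots> \<le> fmap t"
    using False assms(1) fmap_strict_mono[of s t] by (cases "s = t") auto
  finally show ?thesis .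
qed

section \<open>Densities along iterated Kronecker squares\<close>

primrec kron_diag_iter :: "nat \<Rightarrow> (nat \<Rightarrow> 'a :: times) \<Rightarrow> nat \<Rightarrow> nat \<Rightarrow> 'a" where
  "kron_diag_iter N d 0 = d"
| "kron_diag_iter N d (Suc k) = kron_square (N ^ 2 ^ k) (kron_diag_iter N d k)"

lemma kron_diag_iter_nonzero:
  fixes d :: "nat \<Rightarrow> 'a :: semiring_no_zero_divisors"
  assumes "\<And>i. i < N \<Longrightarrow> d i \<noteq> 0"
  shows "i < N ^ 2 ^ k \<Longrightarrow> kron_diag_iter N d k i \<noteq> 0"
proof (induction k arbitrary: i)
  case (Suc k)
  then have "i < N ^ 2 ^ k * N ^ 2 ^ k" by (simp only: power_two_power_Suc)
  then show ?case using Suc.IH by (simp add: kron_square_def div_mod_less_mult)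
qed (use assms in simp)

lemma coincidence_density_le:
  fixes d :: "nat \<Rightarrow> 'a :: field"
  assumes N: "0 < N" and nonzero: "\<And>i. i < N \<Longrightarrow> d i \<noteq> 0"
  defines "p \<equiv> real (ones_count N d) / real N"
  shows "real (coincidences (N ^ 2 ^ k) (kron_diag_iter N d k)) / real (N ^ 2 ^ k) ^ 2
    \<le> (fmap ^^ Suc k) p"
proof (induction k)
  case 0
  have "real (coincidences N d) / real N ^ 2
      \<le> (real (ones_count N d) ^ 2 + (real N - real (ones_count N d)) ^ 2) / real N ^ 2"
    by (intro divide_right_mono coincidences_le_ones_count) simp
  also have "\<dots> = fmap p"
    using N by (simp add: p_def fmap_def field_simps)
  finally show ?case by simp
next
  case (Suc k)
  define M where "M = N ^ 2 ^ k"
  define u where "u = real (coincidences M (kron_diag_iter N d k))"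
  define s where "s = u / real M ^ 2"
  have M: "0 < M" using N by (simp add: M_def)
  have "real (coincidences (M * M) (kron_square M (kron_diag_iter N d k))) / real (M * M) ^ 2
      \<le> (u ^ 2 + (real (M * M) - u) * min u (real (M * M) - u)) / real (M * M) ^ 2"
    unfolding u_def using kron_diag_iter_nonzero[OF nonzero]
    by (intro divide_right_mono coincidences_kron_square_le) (simp_all add: M_def)
  also have "\<dots> = s ^ 2 + (1 - s) * min s (1 - s)"
    using M by (simp add: s_def min_def field_simps power2_eq_square)
  finally have recursion: "real (coincidences (M * M) (kron_square M (kron_diag_iter N d k))) / real (M * M) ^ 2
      \<le> s ^ 2 + (1 - s) * min s (1 - s)" .
  have "s \<le> (fmap ^^ Suc k) p"
    using Suc by (simp add: s_def u_def M_def)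
  then have "real (coincidences (M * M) (kron_square M (kron_diag_iter N d k))) / real (M * M) ^ 2
      \<le> fmap ((fmap ^^ Suc k) p)"
    using recursion by (rule le_fmap_if_le_recursion)
  then show ?case unfolding power_two_power_Suc by (simp add: M_def)
qed

lemma ones_density_le:
  fixes d :: "nat \<Rightarrow> 'a :: field"
  assumes "0 < N" and nonzero: "\<And>i. i < N \<Longrightarrow> d i \<noteq> 0"
  shows "real (ones_count (N ^ 2 ^ Suc k) (kron_diag_iter N d (Suc k))) / real (N ^ 2 ^ Suc k)
    \<le> (fmap ^^ Suc k) (real (ones_count N d) / real N)"
proof -
  define M where "M = N ^ 2 ^ k"
  have "real (ones_count (M * M) (kron_square M (kron_diag_iter N d k))) / real (M * M)
      \<le> real (coincidences M (kron_diag_iter N d k)) / real M ^ 2"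
    using kron_diag_iter_nonzero[OF nonzero]
    by (simp add: divide_right_mono ones_count_kron_square_le M_def power2_eq_square)
  also have "\<dots> \<le> (fmap ^^ Suc k) (real (ones_count N d) / real N)"
    unfolding M_def using assms by (rule coincidence_density_le)
  finally show ?thesis unfolding power_two_power_Suc by (simp add: M_def)
qed

section \<open>Multiplicity of the eigenvalue one\<close>

lemma diag_kron_iter:
  assumes T: "T \<in> carrier_mat n n"
  shows "i < n ^ 2 ^ k \<Longrightarrow> kron_iter T k $$ (i, i) = kron_diag_iter n (\<lambda>j. T $$ (j, j)) k i"
proof (induction k arbitrary: i)
  case (Suc k)
  then have i: "i < n ^ 2 ^ k * n ^ 2 ^ k" by (simp only: power_two_power_Suc)
  then show ?case
    using kron_iter_carrier[OF T, of k] Suc.IH by (simp add: kron_square_def div_mod_less_mult)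
qed simp

lemma order_char_poly_upper_triangular:
  assumes "upper_triangular T" "T \<in> carrier_mat N N"
  shows "Polynomial.order a (char_poly T) = card {i \<in> {..<N}. T $$ (i, i) = a}"
proof -
  have "Polynomial.order a (char_poly T) = Polynomial.order a (\<Prod>x \<leftarrow> diag_mat T. [:- x, 1:])"
    using assms by (simp add: char_poly_upper_triangular)
  also have "\<dots> = (\<Sum>i \<leftarrow> [0..<N]. if T $$ (i, i) = a then 1 else 0)"
    using assms by (subst order_prod_list) (auto simp: o_def order_linear' diag_mat_def)
  also have "\<dots> = card {i \<in> {..<N}. T $$ (i, i) = a}"
    by (simp add: sum_set_upt_conv_sum_list_nat[symmetric] sum.If_cases) (simp add: Int_def)
  finally show ?thesis .
qed

lemma M1_similar_upper_triangular:
  assumes "similar_mat B T" "upper_triangular T" "T \<in> carrier_mat N N"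
  shows "M1 B = real (ones_count N (\<lambda>i. T $$ (i, i))) / real N"
proof -
  have "dim_row B = N" using similar_matD[OF assms(1)] assms(3) by auto
  then show ?thesis
    using assms by (simp add: M1_def ones_count_def char_poly_similar order_char_poly_upper_triangular)
qed

lemma M1_kron_iter:
  assumes "similar_mat A T" "upper_triangular T" "T \<in> carrier_mat n n"
  shows "M1 (kron_iter A k) = real (ones_count (n ^ 2 ^ k) (kron_diag_iter n (\<lambda>i. T $$ (i, i)) k)) / real (n ^ 2 ^ k)"
proof -
  have "M1 (kron_iter A k) = real (ones_count (n ^ 2 ^ k) (\<lambda>i. kron_iter T k $$ (i, i))) / real (n ^ 2 ^ k)"
    using assms by (intro M1_similar_upper_triangular similar_mat_kron_iter upper_triangular_kron_iter
      kron_iter_carrier)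
  also have "ones_count (n ^ 2 ^ k) (\<lambda>i. kron_iter T k $$ (i, i)) =
      ones_count (n ^ 2 ^ k) (kron_diag_iter n (\<lambda>i. T $$ (i, i)) k)"
    unfolding ones_count_def using diag_kron_iter[OF assms(3)] by (intro arg_cong[where f = card]) auto
  finally show ?thesis .
qed

lemma invertible_mat_det_nonzero:
  fixes A :: "'a :: field mat"
  assumes A: "A \<in> carrier_mat n n" and "invertible_mat A"
  shows "det A \<noteq> 0"
proof -
  obtain B where AB: "A * B = 1\<^sub>m n" and BA: "B * A = 1\<^sub>m (dim_row B)"
    using assms unfolding invertible_mat_def inverts_mat_def by auto
  have "B \<in> carrier_mat n n"
    using A AB BA by (metis carrier_matD(2) carrier_matI index_mult_mat(3) index_one_mat(3))
  then have "det A * det B = 1" using A AB by (simp add: det_mult[symmetric])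
  then show ?thesis by auto
qed

lemma upper_triangular_diag_nonzero:
  fixes T :: "'a :: idom mat"
  assumes "upper_triangular T" "T \<in> carrier_mat n n" "det T \<noteq> 0" "i < n"
  shows "T $$ (i, i) \<noteq> 0"
proof -
  have "prod_list (diag_mat T) \<noteq> 0" using det_upper_triangular[OF assms(1,2)] assms(3) by simp
  moreover have "T $$ (i, i) \<in> set (diag_mat T)" using assms by (simp add: diag_mat_def)
  ultimately show ?thesis by auto
qed

lemma M1_kron_iter_le:
  fixes A :: "complex mat"
  assumes A: "A \<in> carrier_mat n n" and "invertible_mat A" and "0 < n"
  shows "M1 (kron_iter A (Suc k)) \<le> (fmap ^^ Suc k) (M1 A)"
proof -
  obtain es where "char_poly A = (\<Prod>a \<leftarrow> es. [:- a, 1:])"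
    using char_poly_factorized[OF A] by blast
  then obtain T where T: "T \<in> carrier_mat n n" "upper_triangular T" "similar_mat A T"
    using schur_upper_triangular[OF A] by blast
  have "det T \<noteq> 0"
    using det_similar[OF T(3)] invertible_mat_det_nonzero[OF assms(1,2)] by simp
  then have "\<And>i. i < n \<Longrightarrow> T $$ (i, i) \<noteq> 0"
    using T by (intro upper_triangular_diag_nonzero)
  from ones_density_le[OF \<open>0 < n\<close> this] show ?thesis
    using M1_kron_iter[OF T(3,2,1), of "Suc k"] M1_kron_iter[OF T(3,2,1), of 0] by simp
qed

theorem mainTheorem12:
  fixes A :: "complex mat" and n :: nat and c :: real
  assumes "A \<in> carrier_mat n n" and "invertible_mat A"
    and "1/2 < M1 A" and "M1 A < 1"
    and "M1 A < c" and "c < 1"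
  shows "\<forall>m\<ge>1. M1 (kron_iter A (m - 1)) < (fmap ^^ (m - 1)) c"
proof (intro allI impI)
  fix m :: nat
  have "0 < n"
    using assms(1,3) by (cases n) (auto simp: M1_def)
  show "M1 (kron_iter A (m - 1)) < (fmap ^^ (m - 1)) c"
  proof (cases "m - 1")
    case 0
    then show ?thesis using assms(5) by simp
  next
    case (Suc k)
    have "M1 (kron_iter A (Suc k)) \<le> (fmap ^^ Suc k) (M1 A)"
      using assms(1,2) \<open>0 < n\<close> by (rule M1_kron_iter_le)
    also have "\<dots> < (fmap ^^ Suc k) c"
      using assms(3,5) by (intro funpow_fmap_strict_mono) simp_all
    finally show ?thesis using Suc by simp
  qed
qed

end
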